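(* Let $F$ be a field, $\ell\le m$ positive integers, $V$ an $m$-dimensional $F$-vector space, and $E$ a close subspace of $\bigwedge^{\ell}V$ of dimension $r$. Then $E$ is decomposable. Moreover, if $\{\omega_1,\dots,\omega_r\}$ is a basis of $E$, then $V_E=V_{\omega_1}\cap\cdots\cap V_{\omega_r}$ and $V^E=V_{\omega_1}+\cdots+V_{\omega_r}$. Further, if $r>1$, then $\dim V_E=\ell-1$ and $\dim V^E=\ell+r-1$ if $E$ is close of type I, whereas $\dim V_E=\ell-r+1$ and $\dim V^E=\ell+1$ if $E$ is close of type II.
   Context: For $\omega\in\bigwedge^{\ell}V$, $V_\omega=\{v\in V: v\wedge\omega=0\}$. For a subspace $E$ of $\bigwedge^{\ell}V$, $V_E=\bigcap_{\omega\in E}V_\omega$ and $V^E=\sum_{0\ne\omega\in E}V_\omega$. A nonzero $\omega$ is decomposable if $\omega=v_1\wedge\cdots\wedge v_\ell$ with $v_i\in V$; a subspace is decomposable if all nonzero elements are. With $r=\dim E$: $E$ is close of type I if there are linearly independent $f_1,\dots,f_{\ell-1},g_1,\dots,g_r\in V$ with $E=\mathrm{span}\{f_1\wedge\cdots\wedge f_{\ell-1}\wedge g_i:1\le i\le r\}$; close of type II if there are linearly independent $u_1,\dots,u_{\ell-r+1},g_1,\dots,g_r\in V$ with $E=\mathrm{span}\{u_1\wedge\cdots\wedge u_{\ell-r+1}\wedge g_1\wedge\cdots\wedge\widehat{g_i}\wedge\cdots\wedge g_r:1\le i\le r\}$ ($\widehat{g_i}$ omitted); close if of type I or type II. *)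

theory Defs
  imports Complex_Main "HOL-Library.Function_Algebras"
begin

text \<open>Concrete model: V = ('n => 'a) with 'n a finite linearly ordered index type
  (the standard basis e_i, i :: 'n), so m = CARD('n). The exterior power is modelled
  by coordinates with respect to the basis e_S (S an l-subset of 'n, wedge in increasing
  order): an element is a function 'n set => 'a vanishing off the l-subsets.\<close>

definition fscale :: "'a::field \<Rightarrow> ('b \<Rightarrow> 'a) \<Rightarrow> ('b \<Rightarrow> 'a)" where
  "fscale c f = (\<lambda>x. c * f x)"

definition ext_power :: "nat \<Rightarrow> ('n::{finite,linorder} set \<Rightarrow> 'a::field) set" where
  "ext_power l = {\<omega>. \<forall>S. card S \<noteq> l \<longrightarrow> \<omega> S = 0}"

definition wedge_vec :: "('n::{finite,linorder} \<Rightarrow> 'a::field) \<Rightarrow> ('n set \<Rightarrow> 'a) \<Rightarrow> ('n set \<Rightarrow> 'a)" where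
  "wedge_vec v \<omega> = (\<lambda>T. \<Sum>i\<in>T. (-1) ^ card {j\<in>T. j < i} * v i * \<omega> (T - {i}))"

definition ext_one :: "'n set \<Rightarrow> 'a::field" where
  "ext_one = (\<lambda>S. if S = {} then 1 else 0)"

fun wedge_list :: "('n::{finite,linorder} \<Rightarrow> 'a::field) list \<Rightarrow> ('n set \<Rightarrow> 'a)" where
  "wedge_list [] = ext_one"
| "wedge_list (v # vs) = wedge_vec v (wedge_list vs)"

definition lin_indep_list :: "('n \<Rightarrow> 'a::field) list \<Rightarrow> bool" where
  "lin_indep_list vs \<longleftrightarrow> distinct vs \<and> \<not> Modules.module.dependent fscale (set vs)"

definition decomposable :: "nat \<Rightarrow> ('n::{finite,linorder} set \<Rightarrow> 'a::field) \<Rightarrow> bool" where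
  "decomposable l \<omega> \<longleftrightarrow> \<omega> \<noteq> 0 \<and> (\<exists>vs. length vs = l \<and> \<omega> = wedge_list vs)"

definition decomposable_subspace :: "nat \<Rightarrow> ('n::{finite,linorder} set \<Rightarrow> 'a::field) set \<Rightarrow> bool" where
  "decomposable_subspace l E \<longleftrightarrow> (\<forall>\<omega>\<in>E. \<omega> \<noteq> 0 \<longrightarrow> decomposable l \<omega>)"

definition V_of :: "('n::{finite,linorder} set \<Rightarrow> 'a::field) \<Rightarrow> ('n \<Rightarrow> 'a) set" where
  "V_of \<omega> = {v. wedge_vec v \<omega> = 0}"

definition V_low :: "('n::{finite,linorder} set \<Rightarrow> 'a::field) set \<Rightarrow> ('n \<Rightarrow> 'a) set" where
  "V_low E = (\<Inter>\<omega>\<in>E. V_of \<omega>)"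

definition V_up :: "('n::{finite,linorder} set \<Rightarrow> 'a::field) set \<Rightarrow> ('n \<Rightarrow> 'a) set" where
  "V_up E = Modules.module.span fscale (\<Union>\<omega>\<in>E - {0}. V_of \<omega>)"

definition close_I :: "nat \<Rightarrow> nat \<Rightarrow> ('n::{finite,linorder} set \<Rightarrow> 'a::field) set \<Rightarrow> bool" where
  "close_I l r E \<longleftrightarrow> (\<exists>fs gs. length fs = l - 1 \<and> length gs = r \<and> lin_indep_list (fs @ gs) \<and>
     E = Modules.module.span fscale {wedge_list (fs @ [gs ! i]) | i. i < r})"

definition close_II :: "nat \<Rightarrow> nat \<Rightarrow> ('n::{finite,linorder} set \<Rightarrow> 'a::field) set \<Rightarrow> bool" where
  "close_II l r E \<longleftrightarrow> (\<exists>us gs. int (length us) = int l - int r + 1 \<and> length gs = r \<and>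
     lin_indep_list (us @ gs) \<and>
     E = Modules.module.span fscale {wedge_list (us @ take i gs @ drop (Suc i) gs) | i. i < r})"

definition close :: "nat \<Rightarrow> nat \<Rightarrow> ('n::{finite,linorder} set \<Rightarrow> 'a::field) set \<Rightarrow> bool" where
  "close l r E \<longleftrightarrow> close_I l r E \<or> close_II l r E"

end

theory Submission
  imports Defs
begin

text \<open>A nonzero wedge of x_1, ..., x_l is annihilated exactly by span {x_i}, so everything reduces
  to writing each element of a close space as a multiple of a single wedge.  In type I this is
  linearity of g \<mapsto> f_1 \<and> ... \<and> f_(l-1) \<and> g.  In type II, a combination of the wedges of
  g_1, ..., g_r with one factor omitted equals, after shearing the remaining factors along g_1,
  a single wedge of r - 1 vectors from span {g_i}.  V_E and V^E are then spans of intersections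
  and unions of subsets of the independent set {f, g} resp. {u, g}.  That V^E is spanned by the
  V_\<omega> of an arbitrary basis follows in type I because the last factors of the basis elements span
  the last factors of all of E, and in type II because two non-parallel decomposable l-vectors
  with factors in an (l+1)-dimensional space W already have V_\<omega>'s spanning W.\<close>

section \<open>Linear algebra of coordinate functions\<close>

interpretation V: vector_space "fscale :: 'a::field \<Rightarrow> ('b \<Rightarrow> 'a) \<Rightarrow> ('b \<Rightarrow> 'a)"
  by unfold_locales (auto simp: fscale_def fun_eq_iff algebra_simps)

interpretation V2: vector_space_pair
  "fscale :: 'a::field \<Rightarrow> ('b \<Rightarrow> 'a) \<Rightarrow> ('b \<Rightarrow> 'a)" "fscale :: 'a \<Rightarrow> ('c \<Rightarrow> 'a) \<Rightarrow> ('c \<Rightarrow> 'a)" ..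

(* Keep 0 and + on coordinate functions folded, so that the linearity lemmas below apply. *)
declare zero_fun_apply[simp del] plus_fun_apply[simp del]

lemma sum_fun_apply: "(\<Sum>i\<in>A. f i) x = (\<Sum>i\<in>A. f i x)"
  by (induction A rule: infinite_finite_induct) (auto simp: zero_fun_apply plus_fun_apply)

lemma span_image_lessThan:
  "x \<in> V.span (F ` {..<(r::nat)}) \<Longrightarrow> \<exists>c. x = (\<Sum>i<r. fscale (c i) (F i :: 'b \<Rightarrow> 'a::field))"
proof (induction rule: V.span_induct_alt)
  case base
  then show ?case by (intro exI[of _ "\<lambda>_. 0"]) simp
next
  case (step d x y)
  then obtain k c where k: "k < r" "x = F k" and c: "y = (\<Sum>i<r. fscale (c i) (F i))" by auto
  have "(\<Sum>i<r. fscale ((c(k := c k + d)) i) (F i))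
      = (\<Sum>i<r. fscale (c i) (F i)) + (\<Sum>i<r. if i = k then fscale d (F i) else 0)"
    unfolding sum.distrib[symmetric] by (rule sum.cong) (simp_all add: V.scale_left_distrib)
  also have "\<dots> = fscale d x + y" using k by (simp add: c add.commute)
  finally show ?case by metis
qed

text \<open>Coordinates with respect to I are unique, so those of v are supported in every C i.\<close>
lemma span_INT_independent:
  assumes "V.independent I" "A \<noteq> {}" "\<And>i. i \<in> A \<Longrightarrow> C i \<subseteq> I"
  shows "(\<Inter>i\<in>A. V.span (C i)) = V.span (\<Inter>i\<in>A. C i :: ('n \<Rightarrow> 'a::field) set)"
proof
  show "V.span (\<Inter>i\<in>A. C i) \<subseteq> (\<Inter>i\<in>A. V.span (C i))"
    by (intro INT_greatest V.span_mono) blast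
next
  show "(\<Inter>i\<in>A. V.span (C i)) \<subseteq> V.span (\<Inter>i\<in>A. C i)"
  proof
    fix v assume v: "v \<in> (\<Inter>i\<in>A. V.span (C i))"
    define R where "R = V.representation I v"
    obtain i0 where i0: "i0 \<in> A" using assms(2) by blast
    with v have "v \<in> V.span (C i0)" by blast
    then have v_I: "v \<in> V.span I" using V.span_mono[OF assms(3)[OF i0]] by blast
    have support: "b \<in> (\<Inter>i\<in>A. C i)" if "R b \<noteq> 0" for b
    proof
      fix i assume i: "i \<in> A"
      have "R = V.representation (C i) v"
        unfolding R_def using v i by (intro V.representation_extend assms(1,3)) auto
      then show "b \<in> C i" using that V.representation_ne_zero[of "C i" v b] by simp
    qed
    have "v = (\<Sum>b | R b \<noteq> 0. fscale (R b) b)"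
      unfolding R_def using V.sum_nonzero_representation_eq[OF assms(1) v_I] by simp
    also have "\<dots> \<in> V.span (\<Inter>i\<in>A. C i)"
      using support by (intro V.span_sum V.span_scale V.span_base) auto
    finally show "v \<in> V.span (\<Inter>i\<in>A. C i)" .
  qed
qed

lemma span_subset_if_independent_card_eq:
  assumes "V.independent S" "V.independent U" "finite U" "card S = card U" "S \<subseteq> V.span U"
  shows "V.span U \<subseteq> V.span (S :: ('n \<Rightarrow> 'a::field) set)"
proof -
  have "u \<in> V.span S" if u: "u \<in> U" for u
  proof (rule ccontr)
    assume u_S: "u \<notin> V.span S"
    then have "V.independent (insert u S)" "u \<notin> S"
      using V.independent_insertI[OF _ assms(1)] V.span_base by blast+
    moreover have "insert u S \<subseteq> V.span U" using assms(5) u V.span_base by blast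
    ultimately have "card (insert u S) \<le> card U"
      using V.independent_span_bound[OF assms(3)] by blast
    moreover have "finite S" using V.independent_span_bound[OF assms(3,1,5)] by blast
    ultimately show False using \<open>u \<notin> S\<close> assms(4) by simp
  qed
  then show ?thesis by (simp add: V.span_minimal subsetI)
qed

lemma not_parallel_in_spanning_set:
  assumes "V.span B = E" "x \<in> E" "y \<in> E" "x \<noteq> 0" "y \<notin> V.span {x}" "b \<in> B"
  shows "\<exists>b'\<in>B. b' \<notin> V.span {b :: 'b \<Rightarrow> 'a::field}"
proof (rule ccontr)
  assume "\<not> (\<exists>b'\<in>B. b' \<notin> V.span {b})"
  then have "E \<subseteq> V.span {b}" using assms(1) V.span_minimal[of B "V.span {b}"] by auto
  with assms(2,3) obtain k0 k1 where k: "x = fscale k0 b" "y = fscale k1 b"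
    unfolding V.span_singleton by blast
  with assms(4) have "k0 \<noteq> 0" by auto
  with k have "y = fscale (k1 / k0) x" by simp
  then show False using assms(5) V.span_singleton by auto
qed

definition remove_nth :: "nat \<Rightarrow> 'x list \<Rightarrow> 'x list" where
  "remove_nth i xs = take i xs @ drop (Suc i) xs"

lemma remove_nth_0_Cons [simp]: "remove_nth 0 (x # xs) = xs"
  by (simp add: remove_nth_def)

lemma remove_nth_Suc_Cons [simp]: "remove_nth (Suc i) (x # xs) = x # remove_nth i xs"
  by (simp add: remove_nth_def)

lemma length_remove_nth [simp]: "i < length xs \<Longrightarrow> length (remove_nth i xs) = length xs - 1"
  by (simp add: remove_nth_def)

lemma set_remove_nth_subset: "set (remove_nth i xs) \<subseteq> set xs"
  using set_take_subset[of i xs] set_drop_subset[of "Suc i" xs] by (auto simp: remove_nth_def)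

lemma distinct_remove_nth_set:
  assumes "distinct xs" "i < length xs"
  shows "distinct (remove_nth i xs)" "set (remove_nth i xs) = set xs - {xs ! i}"
proof -
  have xs: "xs = take i xs @ xs ! i # drop (Suc i) xs" using assms(2) by (rule id_take_nth_drop)
  with assms(1) have d: "distinct (take i xs @ xs ! i # drop (Suc i) xs)" by simp
  then show "distinct (remove_nth i xs)" by (simp add: remove_nth_def)
  have "set xs = set (take i xs @ xs ! i # drop (Suc i) xs)" using xs by simp
  with d show "set (remove_nth i xs) = set xs - {xs ! i}" by (auto simp: remove_nth_def)
qed

section \<open>Wedge products\<close>

lemma wedge_vec_add_left: "wedge_vec (v + w) \<omega> = wedge_vec v \<omega> + wedge_vec w \<omega>"
  by (simp add: wedge_vec_def fun_eq_iff algebra_simps sum.distrib plus_fun_apply)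

lemma wedge_vec_add_right: "wedge_vec v (\<omega> + \<eta>) = wedge_vec v \<omega> + wedge_vec v \<eta>"
  by (simp add: wedge_vec_def fun_eq_iff algebra_simps sum.distrib plus_fun_apply)

lemma wedge_vec_scale_left: "wedge_vec (fscale c v) \<omega> = fscale c (wedge_vec v \<omega>)"
  by (simp add: wedge_vec_def fun_eq_iff sum_distrib_left algebra_simps fscale_def)

lemma wedge_vec_scale_right: "wedge_vec v (fscale c \<omega>) = fscale c (wedge_vec v \<omega>)"
  by (simp add: wedge_vec_def fun_eq_iff sum_distrib_left algebra_simps fscale_def)

lemma wedge_vec_zero_left [simp]: "wedge_vec 0 \<omega> = 0"
  by (simp add: wedge_vec_def fun_eq_iff zero_fun_apply)

lemma wedge_vec_zero_right [simp]: "wedge_vec v 0 = 0"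
  by (simp add: wedge_vec_def fun_eq_iff zero_fun_apply)

lemma wedge_vec_sum_right: "wedge_vec v (\<Sum>i\<in>A. f i) = (\<Sum>i\<in>A. wedge_vec v (f i))"
  by (induction A rule: infinite_finite_induct) (auto simp: wedge_vec_add_right)

text \<open>In the double sum for v \<and> v \<and> \<omega> the terms indexed by (i, j) and (j, i)
  cancel: removing the larger index first changes the sign of the smaller one by exactly one.\<close>
lemma wedge_vec_self: "wedge_vec v (wedge_vec v \<omega>) = (0 :: 'n::{finite,linorder} set \<Rightarrow> 'a::field)"
proof (rule ext)
  fix T :: "'n set"
  define s where "s = (\<lambda>(U::'n set) i. (-1::'a) ^ card {k\<in>U. k < i})"
  define g where "g = (\<lambda>i j. s T i * v i * (s (T - {i}) j * v j * \<omega> (T - {i} - {j})))"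
  have double_sum: "wedge_vec v (wedge_vec v \<omega>) T = (\<Sum>i\<in>T. \<Sum>j\<in>T - {i}. g i j)"
    by (simp add: wedge_vec_def g_def s_def sum_distrib_left)
  have split: "(\<Sum>j\<in>T - {i}. g i j)
      = (\<Sum>j\<in>T. if j < i then g i j else 0) + (\<Sum>j\<in>T. if i < j then g i j else 0)" for i
  proof -
    have "(\<Sum>j\<in>T - {i}. g i j) = (\<Sum>j\<in>T. if j \<noteq> i then g i j else 0)"
      by (rule sum.mono_neutral_cong_left) auto
    also have "\<dots> = (\<Sum>j\<in>T. (if j < i then g i j else 0) + (if i < j then g i j else 0))"
      by (rule sum.cong) auto
    finally show ?thesis by (simp add: sum.distrib)
  qed
  have cancel: "g i j + g j i = 0" if "j < i" "i \<in> T" "j \<in> T" for i j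
  proof -
    have "{k \<in> T - {i}. k < j} = {k \<in> T. k < j}" using that by auto
    moreover have "card {k \<in> T. k < i} = Suc (card {k \<in> T - {j}. k < i})"
    proof -
      have "{k \<in> T. k < i} = insert j {k \<in> T - {j}. k < i}" using that by auto
      then show ?thesis by (auto intro!: card_insert_disjoint)
    qed
    moreover have "T - {i} - {j} = T - {j} - {i}" by auto
    ultimately show ?thesis unfolding g_def s_def by (simp add: algebra_simps)
  qed
  have "wedge_vec v (wedge_vec v \<omega>) T
      = (\<Sum>i\<in>T. \<Sum>j\<in>T. if j < i then g i j else 0) + (\<Sum>i\<in>T. \<Sum>j\<in>T. if i < j then g i j else 0)"
    unfolding double_sum split sum.distrib by simp
  also have "\<dots> = (\<Sum>i\<in>T. \<Sum>j\<in>T. (if j < i then g i j else 0) + (if j < i then g j i else 0))"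
    by (subst (2) sum.swap) (simp add: sum.distrib)
  also have "\<dots> = (\<Sum>i\<in>T. \<Sum>j\<in>T. if j < i then g i j + g j i else 0)"
    by (auto intro!: sum.cong)
  also have "\<dots> = 0" using cancel by (auto intro!: sum.neutral)
  finally show "wedge_vec v (wedge_vec v \<omega>) T = 0 T" by (simp add: zero_fun_apply)
qed

lemma wedge_vec_anticomm:
  "wedge_vec v (wedge_vec w \<omega>) = - wedge_vec w (wedge_vec v (\<omega> :: 'n::{finite,linorder} set \<Rightarrow> 'a::field))"
proof -
  have "0 = wedge_vec (v + w) (wedge_vec (v + w) \<omega>)" by (simp add: wedge_vec_self)
  also have "\<dots> = wedge_vec v (wedge_vec w \<omega>) + wedge_vec w (wedge_vec v \<omega>)"
    by (simp add: wedge_vec_add_left wedge_vec_add_right wedge_vec_self)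
  finally show ?thesis by (simp add: eq_neg_iff_add_eq_0)
qed

lemma wedge_list_append: "wedge_list (xs @ ys) = foldr wedge_vec xs (wedge_list ys)"
  by (induction xs) auto

lemma foldr_wedge_vec_add: "foldr wedge_vec xs (\<omega> + \<eta>) = foldr wedge_vec xs \<omega> + foldr wedge_vec xs \<eta>"
  by (induction xs) (auto simp: wedge_vec_add_right)

lemma foldr_wedge_vec_scale: "foldr wedge_vec xs (fscale c \<omega>) = fscale c (foldr wedge_vec xs \<omega>)"
  by (induction xs) (auto simp: wedge_vec_scale_right)

lemma foldr_wedge_vec_zero [simp]: "foldr wedge_vec xs 0 = 0"
  by (induction xs) auto

lemma foldr_wedge_vec_sum: "foldr wedge_vec xs (\<Sum>i\<in>A. f i) = (\<Sum>i\<in>A. foldr wedge_vec xs (f i))"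
  by (induction A rule: infinite_finite_induct) (auto simp: foldr_wedge_vec_add)

lemma wedge_vec_wedge_list_eq_0:
  assumes "w \<in> V.span (set xs)"
  shows "wedge_vec w (wedge_list xs) = (0 :: 'n::{finite,linorder} set \<Rightarrow> 'a::field)"
proof -
  have "wedge_vec x (wedge_list xs) = 0" if "x \<in> set xs" for x
    using that
  proof (induction xs)
    case (Cons y xs)
    then show ?case by (cases "x = y") (simp_all add: wedge_vec_self wedge_vec_anticomm[of x y])
  qed simp
  with assms show ?thesis
    by (induction rule: V.span_induct_alt) (auto simp: wedge_vec_add_left wedge_vec_scale_left)
qed

lemma lin_indep_list_Nil [simp]: "lin_indep_list []"
  by (simp add: lin_indep_list_def V.independent_empty)

lemma lin_indep_list_Cons: "lin_indep_list (v # xs) \<longleftrightarrow> lin_indep_list xs \<and> v \<notin> V.span (set xs)"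
  unfolding lin_indep_list_def using V.independent_insert[of v "set xs"] V.span_base[of v "set xs"]
  by auto

lemma lin_indep_list_sublist:
  "lin_indep_list xs \<Longrightarrow> distinct ys \<Longrightarrow> set ys \<subseteq> set xs \<Longrightarrow> lin_indep_list ys"
  unfolding lin_indep_list_def using V.independent_mono by blast

lemma wedge_list_eq_0_if_dependent:
  "\<not> lin_indep_list xs \<Longrightarrow> wedge_list xs = (0 :: 'n::{finite,linorder} set \<Rightarrow> 'a::field)"
proof (induction xs)
  case (Cons x xs)
  then show ?case
    by (cases "lin_indep_list xs") (auto simp: lin_indep_list_Cons wedge_vec_wedge_list_eq_0)
qed simp

lemma wedge_list_move_to_front:
  "wedge_list (xs @ y # ys)
     = fscale ((-1) ^ length xs) (wedge_list (y # xs @ ys) :: 'n::{finite,linorder} set \<Rightarrow> 'a::field)"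
proof (induction xs)
  case Nil
  then show ?case by (simp add: fscale_def)
next
  case (Cons x xs)
  have "wedge_list ((x # xs) @ y # ys)
      = fscale ((-1) ^ length xs) (wedge_vec x (wedge_vec y (wedge_list (xs @ ys))))"
    using Cons by (simp add: wedge_vec_scale_right)
  also have "\<dots> = fscale ((-1) ^ length (x # xs)) (wedge_list (y # (x # xs) @ ys))"
    by (simp add: wedge_vec_anticomm[of x y] fun_eq_iff fscale_def)
  finally show ?case .
qed

lemma wedge_list_snoc:
  "wedge_list (xs @ [x])
     = fscale ((-1) ^ length xs) (wedge_vec x (wedge_list xs) :: 'n::{finite,linorder} set \<Rightarrow> 'a::field)"
  using wedge_list_move_to_front[of xs x "[]"] by simp

lemma wedge_list_remove_nth:
  "i < length xs \<Longrightarrow> wedge_list xs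
     = fscale ((-1) ^ i) (wedge_vec (xs ! i) (wedge_list (remove_nth i xs)) :: 'n::{finite,linorder} set \<Rightarrow> 'a::field)"
  using wedge_list_move_to_front[of "take i xs" "xs ! i" "drop (Suc i) xs"]
  by (simp add: remove_nth_def id_take_nth_drop[symmetric])

lemma wedge_vec_eq_scale_wedge_list_Cons:
  assumes "y - fscale a x \<in> V.span (set xs)"
  shows "wedge_vec y (wedge_list xs) = fscale a (wedge_list (x # xs) :: 'n::{finite,linorder} set \<Rightarrow> 'a::field)"
proof -
  have "wedge_vec y (wedge_list xs) = wedge_vec (fscale a x + (y - fscale a x)) (wedge_list xs)"
    by (simp add: algebra_simps)
  also have "\<dots> = fscale a (wedge_list (x # xs))"
    using assms unfolding wedge_vec_add_left by (simp add: wedge_vec_scale_left wedge_vec_wedge_list_eq_0)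
  finally show ?thesis .
qed

lemma wedge_vec_wedge_list_shear:
  "wedge_vec y (wedge_list (map (\<lambda>z. z + fscale (c z) y) zs))
     = wedge_vec y (wedge_list zs :: 'n::{finite,linorder} set \<Rightarrow> 'a::field)"
proof (induction zs)
  case (Cons z zs)
  let ?z' = "z + fscale (c z) y" and ?zs' = "map (\<lambda>z. z + fscale (c z) y) zs"
  have "wedge_vec y (wedge_list (?z' # ?zs')) = - wedge_vec ?z' (wedge_vec y (wedge_list zs))"
    using Cons by (simp add: wedge_vec_anticomm[of y ?z'])
  also have "\<dots> = - wedge_vec z (wedge_vec y (wedge_list zs))"
    by (simp add: wedge_vec_add_left wedge_vec_scale_left wedge_vec_self)
  also have "\<dots> = wedge_vec y (wedge_list (z # zs))"
    by (simp add: wedge_vec_anticomm[of z y])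
  finally show ?case by simp
qed simp

lemma wedge_list_eq_0_if_too_long:
  assumes "length xs < length ys" "set ys \<subseteq> V.span (set xs)"
  shows "wedge_list ys = (0 :: 'n::{finite,linorder} set \<Rightarrow> 'a::field)"
proof (rule wedge_list_eq_0_if_dependent, rule notI)
  assume "lin_indep_list ys"
  then have "distinct ys" "V.independent (set ys)" by (auto simp: lin_indep_list_def)
  then have "length ys \<le> card (set xs)"
    using V.independent_span_bound[of "set xs" "set ys"] assms(2) distinct_card by fastforce
  with assms(1) card_length[of xs] show False by simp
qed

text \<open>Gaussian elimination on the factors: pull out a factor with nonzero x-component,
  clear the x-components of the others by shearing, and recurse.\<close>
lemma wedge_list_in_span:
  assumes "length ys = length xs" "set ys \<subseteq> V.span (set xs)"
  shows "\<exists>c. wedge_list ys = fscale c (wedge_list xs :: 'n::{finite,linorder} set \<Rightarrow> 'a::field)"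
  using assms
proof (induction xs arbitrary: ys)
  case Nil
  then show ?case by (intro exI[of _ 1]) (simp add: fscale_def)
next
  case (Cons x xs)
  have "\<forall>y\<in>set ys. \<exists>k. y - fscale k x \<in> V.span (set xs)"
    using Cons.prems(2) V.span_breakdown_eq[of _ x "set xs"] by auto
  then obtain a where a: "\<And>y. y \<in> set ys \<Longrightarrow> y - fscale (a y) x \<in> V.span (set xs)" by metis
  show ?case
  proof (cases "\<exists>y\<in>set ys. a y \<noteq> 0")
    case False
    then have "set ys \<subseteq> V.span (set xs)" using a by fastforce
    then show ?thesis
      using wedge_list_eq_0_if_too_long[of xs ys] Cons.prems(1) by (intro exI[of _ 0]) simp
  next
    case True
    then obtain i where i: "i < length ys" "a (ys ! i) \<noteq> 0" by (metis in_set_conv_nth)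
    define y where "y = ys ! i"
    define rest where "rest = map (\<lambda>z. z + fscale (- (a z / a y)) y) (remove_nth i ys)"
    have y: "y \<in> set ys" "a y \<noteq> 0" using i by (auto simp: y_def)
    have "set rest \<subseteq> V.span (set xs)"
    proof
      fix w assume "w \<in> set rest"
      then obtain z where z: "z \<in> set (remove_nth i ys)" "w = z + fscale (- (a z / a y)) y"
        by (auto simp: rest_def)
      then have "z \<in> set ys" using set_remove_nth_subset[of i ys] by blast
      have "w = (z - fscale (a z) x) + fscale (- (a z / a y)) (y - fscale (a y) x)"
        using y(2) by (simp add: z(2) fun_eq_iff fscale_def plus_fun_apply field_simps)
      then show "w \<in> V.span (set xs)"
        using a[OF \<open>z \<in> set ys\<close>] a[OF y(1)] by (simp add: V.span_diff V.span_scale)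
    qed
    moreover have "length rest = length xs" using i(1) Cons.prems(1) by (simp add: rest_def)
    ultimately obtain c where c: "wedge_list rest = fscale c (wedge_list xs)" using Cons.IH by blast
    have "wedge_list ys = fscale ((-1) ^ i) (wedge_vec y (wedge_list (remove_nth i ys)))"
      using wedge_list_remove_nth[OF i(1)] by (simp add: y_def)
    also have "wedge_vec y (wedge_list (remove_nth i ys)) = wedge_vec y (wedge_list rest)"
      unfolding rest_def by (rule wedge_vec_wedge_list_shear[symmetric])
    also have "\<dots> = fscale c (fscale (a y) (wedge_list (x # xs)))"
      using wedge_vec_eq_scale_wedge_list_Cons[OF a[OF y(1)]] by (simp add: c wedge_vec_scale_right)
    finally show ?thesis by (intro exI[of _ "(-1) ^ i * (c * a y)"]) simp
  qed
qed

section \<open>Nonvanishing wedges and their annihilators\<close>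

definition std_basis :: "'n \<Rightarrow> 'n \<Rightarrow> 'a::field" where
  "std_basis i = (\<lambda>j. if j = i then 1 else 0)"

lemma wedge_vec_std_basis:
  fixes \<omega> :: "'n::{finite,linorder} set \<Rightarrow> 'a::field"
  shows "wedge_vec (std_basis i) \<omega>
     = (\<lambda>T. if i \<in> T then (-1) ^ card {k\<in>T. k < i} * \<omega> (T - {i}) else (0::'a::field))"
proof (rule ext)
  fix T :: "'n::{finite,linorder} set"
  have "wedge_vec (std_basis i) \<omega> T
      = (\<Sum>j\<in>T. if j = i then (-1) ^ card {k\<in>T. k < i} * \<omega> (T - {i}) else 0)"
    unfolding wedge_vec_def by (rule sum.cong) (auto simp: std_basis_def)
  then show "wedge_vec (std_basis i) \<omega> T = (if i \<in> T then (-1) ^ card {k\<in>T. k < i} * \<omega> (T - {i}) else 0)"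
    by simp
qed

lemma wedge_list_std_basis:
  fixes "is" :: "'n::{finite,linorder} list"
  assumes "sorted_wrt (<) is"
  shows "wedge_list (map std_basis is) = (\<lambda>T. if T = set is then 1 else (0::'a::field))"
  using assms
proof (induction "is")
  case Nil
  then show ?case by (simp add: ext_one_def)
next
  case (Cons i "is")
  then have IH: "wedge_list (map std_basis is) = (\<lambda>T. if T = set is then 1 else (0::'a))"
    and greater: "\<forall>k\<in>set is. i < k" by auto
  have "wedge_list (map std_basis (i # is)) T = (if T = insert i (set is) then 1 else 0 :: 'a)" for T
  proof (cases "T = insert i (set is)")
    case True
    with greater have facts: "{k \<in> T. k < i} = {}" "i \<in> T" "T - {i} = set is" by auto
    then have "wedge_list (map std_basis (i # is)) T = (wedge_list (map std_basis is) (set is) :: 'a)"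
      by (simp only: list.map wedge_list.simps wedge_vec_std_basis facts if_True card.empty
          power_0 mult_1)
    also have "\<dots> = 1" by (simp add: IH)
    finally show ?thesis using True by simp
  next
    case False
    with greater have "i \<in> T \<Longrightarrow> T - {i} \<noteq> set is" by auto
    then show ?thesis using False by (simp add: wedge_vec_std_basis IH)
  qed
  then show ?case by auto
qed

lemma span_std_basis: "V.span (range std_basis) = (UNIV :: ('n::finite \<Rightarrow> 'a::field) set)"
proof -
  have "v = (\<Sum>i\<in>UNIV. fscale (v i) (std_basis i))" for v :: "'n \<Rightarrow> 'a"
  proof
    fix j
    have "(\<Sum>i\<in>UNIV. fscale (v i) (std_basis i)) j = (\<Sum>i\<in>UNIV. if i = j then v j else 0)"
      unfolding sum_fun_apply by (rule sum.cong) (auto simp: fscale_def std_basis_def)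
    then show "v j = (\<Sum>i\<in>UNIV. fscale (v i) (std_basis i)) j" by simp
  qed
  moreover have "(\<Sum>i\<in>UNIV. fscale (v i) (std_basis i)) \<in> V.span (range std_basis)" for v :: "'n \<Rightarrow> 'a"
    by (intro V.span_sum V.span_scale V.span_base) auto
  ultimately show ?thesis by auto
qed

text \<open>Nonvanishing is tested by extending to a basis of the whole space and comparing with
  the wedge of the standard basis, which is the nonzero top coordinate function.\<close>
lemma wedge_list_neq_0_iff:
  "wedge_list (xs :: ('n::{finite,linorder} \<Rightarrow> 'a::field) list) \<noteq> 0 \<longleftrightarrow> lin_indep_list xs"
proof
  assume "wedge_list xs \<noteq> 0"
  then show "lin_indep_list xs" using wedge_list_eq_0_if_dependent by blast
next
  assume li: "lin_indep_list xs"
  define L :: "('n \<Rightarrow> 'a) list" where "L = map std_basis (sorted_list_of_set UNIV)"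
  have "wedge_list L UNIV = 1" by (simp add: L_def wedge_list_std_basis)
  then have L_nz: "wedge_list L \<noteq> 0" by (metis zero_fun_apply zero_neq_one)
  then have "lin_indep_list L" using wedge_list_eq_0_if_dependent by blast
  then have L: "distinct L" "V.independent (set L)" by (auto simp: lin_indep_list_def)
  have span_L: "V.span (set L) = UNIV" by (simp add: L_def span_std_basis)
  have xs: "distinct xs" "V.independent (set xs)" using li by (auto simp: lin_indep_list_def)
  obtain B where B: "set xs \<subseteq> B" "V.independent B" "V.span B = UNIV"
    using V.maximal_independent_subset_extend[OF subset_UNIV xs(2)] by (auto simp: top.extremum_unique)
  then have "finite B" using V.independent_span_bound[OF _ B(2), of "set L"] span_L by simp
  then obtain ys where ys: "set ys = B - set xs" "distinct ys" using finite_distinct_list by blast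
  have "card B = card (set L)"
    using V.dim_span_eq_card_independent[OF B(2)] V.dim_span_eq_card_independent[OF L(2)] B(3) span_L
    by simp
  moreover have "set (ys @ xs) = B" "distinct (ys @ xs)" using B(1) ys xs(1) by auto
  ultimately have "length L = length (ys @ xs)"
    using distinct_card distinct_card[OF L(1)] by metis
  moreover have "set L \<subseteq> V.span (set (ys @ xs))" using \<open>set (ys @ xs) = B\<close> B(3) by simp
  ultimately obtain c where "wedge_list L = fscale c (wedge_list (ys @ xs))"
    using wedge_list_in_span[of L "ys @ xs"] by blast
  then show "wedge_list xs \<noteq> 0" using L_nz by (auto simp: wedge_list_append)
qed

lemma V_of_wedge_list:
  "lin_indep_list xs \<Longrightarrow> V_of (wedge_list xs) = V.span (set (xs :: ('n::{finite,linorder} \<Rightarrow> 'a::field) list))"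
  unfolding V_of_def using wedge_list_neq_0_iff[of "_ # xs"]
  by (auto simp: lin_indep_list_Cons wedge_vec_wedge_list_eq_0)

lemma V_of_scale: "c \<noteq> 0 \<Longrightarrow> V_of (fscale c \<omega>) = V_of \<omega>"
  by (simp add: V_of_def wedge_vec_scale_right)

lemma V_of_scaled_wedge_list:
  assumes "fscale a (wedge_list xs) \<noteq> (0 :: 'n::{finite,linorder} set \<Rightarrow> 'a::field)"
  shows "lin_indep_list xs" and "V_of (fscale a (wedge_list xs)) = V.span (set xs)"
proof -
  from assms have "a \<noteq> 0" "wedge_list xs \<noteq> 0" by auto
  then show "lin_indep_list xs" and "V_of (fscale a (wedge_list xs)) = V.span (set xs)"
    by (simp_all add: wedge_list_neq_0_iff V_of_scale V_of_wedge_list)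
qed

section \<open>The spaces V_E and V^E\<close>

lemma V_low_span: "V_low (V.span B) = (\<Inter>\<omega>\<in>B. V_of (\<omega> :: 'n::{finite,linorder} set \<Rightarrow> 'a::field))"
proof
  show "V_low (V.span B) \<subseteq> (\<Inter>\<omega>\<in>B. V_of \<omega>)" unfolding V_low_def using V.span_base by blast
next
  show "(\<Inter>\<omega>\<in>B. V_of \<omega>) \<subseteq> V_low (V.span B)"
  proof
    fix v assume v: "v \<in> (\<Inter>\<omega>\<in>B. V_of \<omega>)"
    have "wedge_vec v \<omega> = 0" if "\<omega> \<in> V.span B" for \<omega>
      using that v
      by (induction rule: V.span_induct_alt) (auto simp: wedge_vec_add_right wedge_vec_scale_right V_of_def)
    then show "v \<in> V_low (V.span B)" by (auto simp: V_low_def V_of_def)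
  qed
qed

lemma V_up_subset_span:
  "(\<And>\<omega>. \<omega> \<in> E - {0} \<Longrightarrow> V_of \<omega> \<subseteq> V.span X)
     \<Longrightarrow> V_up (E :: ('n::{finite,linorder} set \<Rightarrow> 'a::field) set) \<subseteq> V.span X"
  unfolding V_up_def by (intro V.span_minimal) auto

lemma span_V_of_subset_V_up:
  "B \<subseteq> E - {0} \<Longrightarrow> V.span (\<Union>\<omega>\<in>B. V_of \<omega>) \<subseteq> V_up (E :: ('n::{finite,linorder} set \<Rightarrow> 'a::field) set)"
  unfolding V_up_def by (intro V.span_mono) blast

lemma V_up_eq_span_basis:
  assumes "V.independent B" "V.span B = E"
    and "\<And>\<omega>. \<omega> \<in> E - {0} \<Longrightarrow> V_of \<omega> \<subseteq> V.span (\<Union>b\<in>B. V_of b)"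
  shows "V_up (E :: ('n::{finite,linorder} set \<Rightarrow> 'a::field) set) = V.span (\<Union>b\<in>B. V_of b)"
proof
  show "V_up E \<subseteq> V.span (\<Union>b\<in>B. V_of b)" using assms(3) by (rule V_up_subset_span)
  have "0 \<notin> B" using assms(1) V.dependent_zero by blast
  then show "V.span (\<Union>b\<in>B. V_of b) \<subseteq> V_up E"
    using assms(2) V.span_base by (intro span_V_of_subset_V_up) blast
qed

section \<open>Spaces of decomposable vectors\<close>

lemma decomposable_subspaceI:
  assumes "1 \<le> l" "\<And>\<omega>. \<omega> \<in> E \<Longrightarrow> \<exists>a xs. length xs = l \<and> \<omega> = fscale a (wedge_list xs)"
  shows "decomposable_subspace l (E :: ('n::{finite,linorder} set \<Rightarrow> 'a::field) set)"
  unfolding decomposable_subspace_def decomposable_def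
proof (intro ballI impI conjI)
  fix \<omega> assume "\<omega> \<in> E" "\<omega> \<noteq> 0"
  then obtain a xs where xs: "length xs = l" "\<omega> = fscale a (wedge_list xs)" using assms(2) by blast
  with assms(1) obtain x xs' where "xs = x # xs'" by (cases xs) auto
  with xs show "\<exists>vs. length vs = l \<and> \<omega> = wedge_list vs"
    by (intro exI[of _ "fscale a x # xs'"]) (simp add: wedge_vec_scale_left)
qed

lemma linear_wedge_list_snoc:
  "Vector_Spaces.linear fscale fscale (\<lambda>g. wedge_list (fs @ [g]) :: 'n::{finite,linorder} set \<Rightarrow> 'a::field)"
  unfolding Vector_Spaces.linear_iff wedge_list_snoc
  by (simp add: V.vector_space_axioms wedge_vec_add_left wedge_vec_scale_left V.scale_right_distrib
      mult.commute)

lemma V_of_wedge_list_snoc: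
  "wedge_list (fs @ [g]) \<noteq> 0
     \<Longrightarrow> V_of (wedge_list (fs @ [g])) = V.span (insert g (set (fs :: ('n::{finite,linorder} \<Rightarrow> 'a::field) list)))"
  by (simp add: wedge_list_neq_0_iff V_of_wedge_list)

text \<open>If the basis elements share the factors fs, the last factor of any element of the span
  can be taken in the span of the V_b, because wedging with fs is linear.\<close>
lemma V_of_subset_span_V_of_snoc:
  assumes B: "B \<subseteq> range (\<lambda>g. wedge_list (fs @ [g])) - {0}"
    and \<omega>: "\<omega> \<in> V.span B" "\<omega> \<noteq> 0"
  shows "V_of \<omega> \<subseteq> V.span (\<Union>b\<in>B. V_of (b :: 'n::{finite,linorder} set \<Rightarrow> 'a::field))"
proof -
  define W where "W = V.span (\<Union>b\<in>B. V_of b)"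
  define \<phi> where "\<phi> = (\<lambda>g. wedge_list (fs @ [g]) :: 'n set \<Rightarrow> 'a)"
  have factors_in_W: "insert g (set fs) \<subseteq> W" if "\<phi> g \<in> B" for g
  proof -
    have "V_of (\<phi> g) \<subseteq> W" unfolding W_def using that by (auto intro: V.span_base)
    moreover have "\<phi> g \<noteq> 0" using that B by blast
    ultimately show ?thesis
      using V_of_wedge_list_snoc[of fs g] V.span_superset[of "insert g (set fs)"]
      unfolding \<phi>_def by blast
  qed
  have "B \<noteq> {}" using \<omega> by auto
  then have fs_W: "set fs \<subseteq> W" using B factors_in_W by (auto simp: \<phi>_def)
  have "B \<subseteq> \<phi> ` W" using B factors_in_W by (auto simp: \<phi>_def)
  then have "V.span B \<subseteq> V.span (\<phi> ` W)" by (rule V.span_mono)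
  also have "\<dots> = \<phi> ` V.span W"
    unfolding \<phi>_def by (rule V2.linear_span_image[OF linear_wedge_list_snoc])
  also have "\<dots> = \<phi> ` W" by (simp add: W_def V.span_span)
  finally have "V.span B \<subseteq> \<phi> ` W" .
  with \<omega> obtain g where g: "g \<in> W" "\<omega> = \<phi> g" by blast
  have "V_of \<omega> = V.span (insert g (set fs))"
    using \<omega>(2) V_of_wedge_list_snoc[of fs g] by (simp add: g(2) \<phi>_def)
  also have "\<dots> \<subseteq> W" using fs_W g(1) by (simp add: W_def V.span_minimal)
  finally show ?thesis unfolding W_def .
qed

lemma V_of_subset_span_V_of_line:
  assumes "V.independent B" "V.span B = V.span {\<eta>}" "\<omega> \<in> V.span {\<eta>}" "\<omega> \<noteq> 0"
  shows "V_of \<omega> \<subseteq> V.span (\<Union>b\<in>B. V_of (b :: 'n::{finite,linorder} set \<Rightarrow> 'a::field))"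
proof -
  have V_of_line: "V_of \<chi> = V_of \<eta>" if \<chi>: "\<chi> \<in> V.span {\<eta>}" "\<chi> \<noteq> 0" for \<chi>
  proof -
    obtain k where k: "\<chi> = fscale k \<eta>" using \<chi>(1) V.span_singleton by auto
    with \<chi>(2) have "k \<noteq> 0" by auto
    with k show ?thesis by (simp add: V_of_scale)
  qed
  have "B \<noteq> {}" using assms(2-4) by auto
  then obtain b where b: "b \<in> B" by blast
  then have "b \<noteq> 0" using assms(1) V.dependent_zero by blast
  then have "V_of \<omega> = V_of b"
    using b assms V.span_base V_of_line by metis
  then show ?thesis using b V.span_superset by blast
qed

lemma span_subset_span_V_of_pair:
  assumes U: "V.independent U" "card U = Suc l"
    and b: "length xs = l" "set xs \<subseteq> V.span U" "fscale a (wedge_list xs) \<noteq> 0"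
    and b': "length xs' = l" "set xs' \<subseteq> V.span U" "fscale a' (wedge_list xs') \<noteq> 0"
    and not_parallel: "fscale a' (wedge_list xs') \<notin> V.span {fscale a (wedge_list xs)}"
  shows "V.span U \<subseteq> V.span (V_of (fscale a (wedge_list xs)) \<union> V_of (fscale a' (wedge_list xs')))"
    (is "_ \<subseteq> V.span (V_of ?b \<union> V_of ?b')")
proof -
  have xs: "lin_indep_list xs" and V_b: "V_of ?b = V.span (set xs)"
    using V_of_scaled_wedge_list[OF b(3)] by auto
  have V_b': "V_of ?b' = V.span (set xs')" using V_of_scaled_wedge_list[OF b'(3)] by auto
  have "\<not> set xs' \<subseteq> V.span (set xs)"
  proof
    assume "set xs' \<subseteq> V.span (set xs)"
    then obtain c where c: "wedge_list xs' = fscale c (wedge_list xs)"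
      using wedge_list_in_span[of xs' xs] b b' by auto
    have "a \<noteq> 0" using b(3) by auto
    then have "?b' = fscale (a' * c / a) ?b" by (simp add: c)
    moreover have "fscale (a' * c / a) ?b \<in> V.span {?b}" by (intro V.span_scale V.span_base) simp
    ultimately show False using not_parallel by argo
  qed
  then obtain x' where x': "x' \<in> set xs'" "x' \<notin> V.span (set xs)" by blast
  have "distinct xs" "V.independent (set xs)" using xs by (auto simp: lin_indep_list_def)
  moreover have "x' \<notin> set xs" using x'(2) V.span_base by blast
  ultimately have "V.independent (insert x' (set xs))" "card (insert x' (set xs)) = card U"
    using V.independent_insertI[OF x'(2)] distinct_card b(1) U(2) by auto
  moreover have "insert x' (set xs) \<subseteq> V.span U" using b(2) b'(2) x'(1) by auto
  moreover have "finite U" using U(2) card.infinite by fastforce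
  ultimately have "V.span U \<subseteq> V.span (insert x' (set xs))"
    using span_subset_if_independent_card_eq U(1) by blast
  also have "\<dots> \<subseteq> V.span (V_of ?b \<union> V_of ?b')"
    unfolding V_b V_b' using x'(1) V.span_base by (intro V.span_mono) blast
  finally show ?thesis .
qed

section \<open>Close spaces of type I\<close>

locale close_I_generators =
  fixes fs gs :: "('n::{finite,linorder} \<Rightarrow> 'a::field) list"
  assumes lin_indep: "lin_indep_list (fs @ gs)"
begin

definition gen :: "nat \<Rightarrow> 'n set \<Rightarrow> 'a" where
  "gen i = wedge_list (fs @ [gs ! i])"

abbreviation E :: "('n set \<Rightarrow> 'a) set" where
  "E \<equiv> V.span (gen ` {..<length gs})"

lemma distinct: "distinct (fs @ gs)" and independent: "V.independent (set (fs @ gs))"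
  using lin_indep by (auto simp: lin_indep_list_def)

lemma lin_indep_gen_factors: "i < length gs \<Longrightarrow> lin_indep_list (fs @ [gs ! i])"
  using distinct by (intro lin_indep_list_sublist[OF lin_indep]) (auto dest: nth_mem)

lemma gen_neq_0: "i < length gs \<Longrightarrow> gen i \<noteq> 0"
  using lin_indep_gen_factors by (simp add: gen_def wedge_list_neq_0_iff)

lemma V_of_gen: "i < length gs \<Longrightarrow> V_of (gen i) = V.span (insert (gs ! i) (set fs))"
  using lin_indep_gen_factors by (simp add: gen_def V_of_wedge_list)

lemma E_eq_image: "E = (\<lambda>g. wedge_list (fs @ [g])) ` V.span (set gs)"
proof -
  have "gen ` {..<length gs} = (\<lambda>g. wedge_list (fs @ [g])) ` ((!) gs ` {..<length gs})"
    by (simp add: gen_def image_image)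
  also have "(!) gs ` {..<length gs} = set gs" by (auto simp: in_set_conv_nth)
  finally show ?thesis using V2.linear_span_image[OF linear_wedge_list_snoc] by simp
qed

lemma decomposable: "decomposable_subspace (Suc (length fs)) E"
proof (rule decomposable_subspaceI)
  fix \<omega> assume "\<omega> \<in> E"
  then obtain g where "\<omega> = wedge_list (fs @ [g])" by (auto simp: E_eq_image)
  then show "\<exists>a xs. length xs = Suc (length fs) \<and> \<omega> = fscale a (wedge_list xs)"
    by (intro exI[of _ 1] exI[of _ "fs @ [g]"]) simp
qed simp

lemma V_of_subset_span_basis:
  assumes "V.independent B" "V.span B = E" "\<omega> \<in> E" "\<omega> \<noteq> 0"
  shows "V_of \<omega> \<subseteq> V.span (\<Union>b\<in>B. V_of b)"
proof (rule V_of_subset_span_V_of_snoc)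
  have "0 \<notin> B" using assms(1) V.dependent_zero by blast
  moreover have "B \<subseteq> E" using assms(2) V.span_superset by blast
  ultimately show "B \<subseteq> range (\<lambda>g. wedge_list (fs @ [g])) - {0}"
    unfolding E_eq_image by blast
qed (use assms in auto)

lemma V_low_eq:
  assumes "1 < length gs"
  shows "V_low E = V.span (set fs)"
proof -
  have "(\<Inter>i<length gs. insert (gs ! i) (set fs)) = set fs"
  proof (intro equalityI subsetI)
    fix x assume x: "x \<in> (\<Inter>i<length gs. insert (gs ! i) (set fs))"
    then have "x = gs ! 0 \<or> x \<in> set fs" "x = gs ! 1 \<or> x \<in> set fs" using assms by auto
    moreover have "gs ! 0 \<noteq> gs ! 1"
      using distinct assms by (subst nth_eq_iff_index_eq) auto
    ultimately show "x \<in> set fs" by auto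
  qed auto
  moreover have "V_low E = (\<Inter>i<length gs. V.span (insert (gs ! i) (set fs)))"
    by (simp add: V_low_span V_of_gen)
  moreover have "(\<Inter>i<length gs. V.span (insert (gs ! i) (set fs)))
      = V.span (\<Inter>i<length gs. insert (gs ! i) (set fs))"
    using assms by (intro span_INT_independent[OF independent]) auto
  ultimately show ?thesis by simp
qed

lemma V_up_eq:
  assumes "0 < length gs"
  shows "V_up E = V.span (set (fs @ gs))"
proof
  show "V_up E \<subseteq> V.span (set (fs @ gs))"
  proof (rule V_up_subset_span)
    fix \<omega> assume "\<omega> \<in> E - {0}"
    then obtain g where g: "g \<in> V.span (set gs)" "\<omega> = wedge_list (fs @ [g])" "\<omega> \<noteq> 0"
      by (auto simp: E_eq_image)
    have "insert g (set fs) \<subseteq> V.span (set (fs @ gs))"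
      using g(1) V.span_mono[of "set gs" "set (fs @ gs)"] V.span_superset[of "set (fs @ gs)"] by auto
    moreover have "V_of \<omega> = V.span (insert g (set fs))" using g(2,3) V_of_wedge_list_snoc by simp
    ultimately show "V_of \<omega> \<subseteq> V.span (set (fs @ gs))" by (simp add: V.span_minimal)
  qed
  have "set (fs @ gs) \<subseteq> (\<Union>i<length gs. V_of (gen i))"
    using assms V_of_gen by (auto simp: in_set_conv_nth intro!: V.span_base)
  then have "V.span (set (fs @ gs)) \<subseteq> V.span (\<Union>\<omega>\<in>gen ` {..<length gs}. V_of \<omega>)"
    by (intro V.span_mono) auto
  also have "\<dots> \<subseteq> V_up E"
    using gen_neq_0 by (intro span_V_of_subset_V_up) (auto intro: V.span_base)
  finally show "V.span (set (fs @ gs)) \<subseteq> V_up E" .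
qed

end

lemma close_I_properties:
  fixes E :: "('n::{finite,linorder} set \<Rightarrow> 'a::field) set"
  assumes "1 \<le> l" "close_I l r E"
  shows "decomposable_subspace l E"
    and "\<And>B \<omega>. V.independent B \<Longrightarrow> V.span B = E \<Longrightarrow> \<omega> \<in> E - {0}
           \<Longrightarrow> V_of \<omega> \<subseteq> V.span (\<Union>b\<in>B. V_of b)"
    and "1 < r \<Longrightarrow> V.dim (V_low E) = l - 1 \<and> V.dim (V_up E) = l + r - 1"
proof -
  obtain fs gs where fs: "length fs = l - 1" "length gs = r" "lin_indep_list (fs @ gs)"
    and E: "E = V.span {wedge_list (fs @ [gs ! i]) | i. i < r}"
    using assms(2) unfolding close_I_def by blast
  interpret I: close_I_generators fs gs by unfold_locales fact
  have "{wedge_list (fs @ [gs ! i]) | i. i < r} = I.gen ` {..<length gs}"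
    by (auto simp: I.gen_def fs(2))
  then have E_eq: "E = I.E" by (simp add: E)
  show "decomposable_subspace l E" using I.decomposable assms(1) fs(1) by (simp add: E_eq)
  show "V_of \<omega> \<subseteq> V.span (\<Union>b\<in>B. V_of b)"
    if "V.independent B" "V.span B = E" "\<omega> \<in> E - {0}" for B \<omega>
    using I.V_of_subset_span_basis that by (simp add: E_eq)
  show "V.dim (V_low E) = l - 1 \<and> V.dim (V_up E) = l + r - 1" if "1 < r"
  proof -
    have "V_low E = V.span (set fs)" "V_up E = V.span (set (fs @ gs))"
      using I.V_low_eq I.V_up_eq that fs(2) by (simp_all add: E_eq)
    moreover have "V.independent (set fs)" using V.independent_mono[OF I.independent] by auto
    ultimately show ?thesis using I.distinct I.independent fs assms(1)
      by (simp add: V.dim_eq_card_independent distinct_card card_Un_disjoint)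
  qed
qed

section \<open>Close spaces of type II\<close>

fun shear :: "('n \<Rightarrow> 'a::field) \<Rightarrow> (nat \<Rightarrow> 'a) \<Rightarrow> ('n \<Rightarrow> 'a) list \<Rightarrow> ('n \<Rightarrow> 'a) list" where
  "shear g a [] = []"
| "shear g a (h # hs) = (h + fscale (a 0) g) # shear g (\<lambda>j. a (Suc j)) hs"

lemma length_shear [simp]: "length (shear g a hs) = length hs"
  by (induction hs arbitrary: a) auto

lemma set_shear: "set (shear g a hs) \<subseteq> V.span (insert g (set hs))"
proof (induction hs arbitrary: a)
  case (Cons h hs)
  have "h + fscale (a 0) g \<in> V.span (insert g (set (h # hs)))"
    by (intro V.span_add V.span_scale V.span_base) auto
  moreover have "V.span (insert g (set hs)) \<subseteq> V.span (insert g (set (h # hs)))"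
    by (rule V.span_mono) auto
  ultimately show ?case using Cons[of "\<lambda>j. a (Suc j)"] by auto
qed simp

text \<open>Multilinear expansion of the sheared wedge: each summand with g in two slots vanishes.\<close>
lemma wedge_list_shear:
  "wedge_list (shear g a hs) = wedge_list hs
     + (\<Sum>j<length hs. fscale ((-1) ^ j * a j) (wedge_vec g (wedge_list (remove_nth j hs))))"
proof (induction hs arbitrary: a)
  case Nil
  then show ?case by simp
next
  case (Cons h hs)
  define S where "S = (\<Sum>j<length hs. fscale ((-1) ^ j * a (Suc j)) (wedge_vec g (wedge_list (remove_nth j hs))))"
  have h_S: "wedge_vec h S = (\<Sum>j<length hs.
      fscale ((-1) ^ Suc j * a (Suc j)) (wedge_vec g (wedge_list (remove_nth (Suc j) (h # hs)))))"
    unfolding S_def wedge_vec_sum_right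
    by (rule sum.cong) (auto simp: wedge_vec_scale_right wedge_vec_anticomm[of h g])
  have g_S: "wedge_vec g S = 0"
    unfolding S_def wedge_vec_sum_right by (simp add: wedge_vec_scale_right wedge_vec_self)
  have "wedge_list (shear g a (h # hs)) = wedge_vec (h + fscale (a 0) g) (wedge_list hs + S)"
    using Cons.IH by (simp add: S_def)
  also have "\<dots> = wedge_list (h # hs) + fscale ((-1) ^ 0 * a 0) (wedge_vec g (wedge_list (remove_nth 0 (h # hs))))
      + wedge_vec h S"
    by (simp add: wedge_vec_add_left wedge_vec_add_right wedge_vec_scale_left g_S)
  also have "\<dots> = wedge_list (h # hs) + (\<Sum>j<length (h # hs).
      fscale ((-1) ^ j * a j) (wedge_vec g (wedge_list (remove_nth j (h # hs)))))"
    unfolding h_S length_Cons sum.lessThan_Suc_shift by (simp add: add.assoc)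
  finally show ?case .
qed

text \<open>If the first coefficient is nonzero, the sum is a multiple of the wedge of a shear of the
  remaining factors along the first one; otherwise the first factor splits off.\<close>
lemma sum_wedge_remove_nth_decomposable:
  "\<exists>a ws. length ws = length gs - 1 \<and> set ws \<subseteq> V.span (set gs) \<and>
     (\<Sum>i<length gs. fscale (c i) (wedge_list (remove_nth i gs)))
       = fscale a (wedge_list ws :: 'n::{finite,linorder} set \<Rightarrow> 'a::field)"
proof (induction gs arbitrary: c)
  case Nil
  then show ?case by (intro exI[of _ 0] exI[of _ "[]"]) simp
next
  case (Cons g gs)
  have split: "(\<Sum>i<length (g # gs). fscale (c i) (wedge_list (remove_nth i (g # gs))))
      = fscale (c 0) (wedge_list gs)
        + wedge_vec g (\<Sum>i<length gs. fscale (c (Suc i)) (wedge_list (remove_nth i gs)))"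
    unfolding length_Cons sum.lessThan_Suc_shift by (simp add: wedge_vec_sum_right wedge_vec_scale_right)
  have span_gs: "V.span (set gs) \<subseteq> V.span (set (g # gs))" by (rule V.span_mono) auto
  consider "gs = []" | "gs \<noteq> []" "c 0 = 0" | "c 0 \<noteq> 0" by blast
  then show ?case
  proof cases
    case 1
    then show ?thesis by (intro exI[of _ "c 0"] exI[of _ "[]"]) simp
  next
    case 2
    obtain a ws where ws: "length ws = length gs - 1" "set ws \<subseteq> V.span (set gs)"
      "(\<Sum>i<length gs. fscale (c (Suc i)) (wedge_list (remove_nth i gs))) = fscale a (wedge_list ws)"
      using Cons.IH[of "\<lambda>i. c (Suc i)"] by blast
    have "set (g # ws) \<subseteq> V.span (set (g # gs))"
      using ws(2) span_gs V.span_base[of g "set (g # gs)"] by auto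
    moreover have "length (g # ws) = length (g # gs) - 1" using ws(1) 2 by (cases gs) auto
    moreover have "(\<Sum>i<length (g # gs). fscale (c i) (wedge_list (remove_nth i (g # gs))))
        = fscale a (wedge_list (g # ws))"
      unfolding split ws(3) by (simp add: 2 wedge_vec_scale_right)
    ultimately show ?thesis by blast
  next
    case 3
    define \<alpha> where "\<alpha> = (\<lambda>j. (-1) ^ j * c (Suc j) / c 0)"
    have coeff: "c 0 * ((-1) ^ j * \<alpha> j) = c (Suc j)" for j
    proof -
      have "((-1::'a) ^ j * (-1) ^ j) = 1" by (simp add: power_mult_distrib[symmetric])
      then show ?thesis using 3 unfolding \<alpha>_def by (simp add: field_simps)
    qed
    have "fscale (c 0) (wedge_list (shear g \<alpha> gs))
        = (\<Sum>i<length (g # gs). fscale (c i) (wedge_list (remove_nth i (g # gs))))"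
      unfolding split wedge_list_shear V.scale_right_distrib V.scale_sum_right wedge_vec_sum_right
      by (simp add: wedge_vec_scale_right coeff)
    moreover have "set (shear g \<alpha> gs) \<subseteq> V.span (set (g # gs))" using set_shear by simp
    ultimately show ?thesis by (intro exI[of _ "c 0"] exI[of _ "shear g \<alpha> gs"]) simp
  qed
qed

locale close_II_generators =
  fixes us gs :: "('n::{finite,linorder} \<Rightarrow> 'a::field) list"
  assumes lin_indep: "lin_indep_list (us @ gs)"
begin

definition gen :: "nat \<Rightarrow> 'n set \<Rightarrow> 'a" where
  "gen i = wedge_list (us @ remove_nth i gs)"

abbreviation E :: "('n set \<Rightarrow> 'a) set" where
  "E \<equiv> V.span (gen ` {..<length gs})"

lemma distinct: "distinct (us @ gs)" and independent: "V.independent (set (us @ gs))"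
  using lin_indep by (auto simp: lin_indep_list_def)

lemma gen_factors:
  assumes "i < length gs"
  shows "lin_indep_list (us @ remove_nth i gs)" "set (us @ remove_nth i gs) = set us \<union> (set gs - {gs ! i})"
proof -
  have "distinct (remove_nth i gs)" "set (remove_nth i gs) = set gs - {gs ! i}"
    using distinct_remove_nth_set[OF _ assms] distinct by auto
  then show "lin_indep_list (us @ remove_nth i gs)" "set (us @ remove_nth i gs) = set us \<union> (set gs - {gs ! i})"
    using distinct by (auto intro!: lin_indep_list_sublist[OF lin_indep])
qed

lemma gen_neq_0: "i < length gs \<Longrightarrow> gen i \<noteq> 0"
  using gen_factors by (simp add: gen_def wedge_list_neq_0_iff)

lemma V_of_gen: "i < length gs \<Longrightarrow> V_of (gen i) = V.span (set us \<union> (set gs - {gs ! i}))"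
  using gen_factors by (simp add: gen_def V_of_wedge_list)

lemma mem_E_imp_scaled_wedge_us:
  assumes "\<omega> \<in> E"
  shows "\<exists>a ws. length ws = length gs - 1 \<and> set ws \<subseteq> V.span (set gs) \<and> \<omega> = fscale a (wedge_list (us @ ws))"
proof -
  obtain c where "\<omega> = (\<Sum>i<length gs. fscale (c i) (gen i))" using span_image_lessThan assms by blast
  also have "\<dots> = foldr wedge_vec us (\<Sum>i<length gs. fscale (c i) (wedge_list (remove_nth i gs)))"
    by (simp add: gen_def foldr_wedge_vec_sum foldr_wedge_vec_scale wedge_list_append)
  moreover obtain a ws where "length ws = length gs - 1" "set ws \<subseteq> V.span (set gs)"
    "(\<Sum>i<length gs. fscale (c i) (wedge_list (remove_nth i gs))) = fscale a (wedge_list ws)"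
    using sum_wedge_remove_nth_decomposable by blast
  ultimately show ?thesis
    by (intro exI[of _ a] exI[of _ ws]) (simp add: foldr_wedge_vec_scale wedge_list_append)
qed

lemma mem_E_imp_scaled_wedge:
  assumes "\<omega> \<in> E"
  shows "\<exists>a xs. length xs = length us + length gs - 1 \<and> set xs \<subseteq> V.span (set (us @ gs))
    \<and> \<omega> = fscale a (wedge_list xs)"
proof (cases "gs = []")
  case True
  then have "\<omega> = fscale 0 (wedge_list (replicate (length us - 1) 0))" using assms by simp
  then show ?thesis
    by (intro exI[of _ 0] exI[of _ "replicate (length us - 1) 0"]) (auto simp: V.span_zero True)
next
  case False
  then obtain a ws where ws: "length ws = length gs - 1" "set ws \<subseteq> V.span (set gs)"
    "\<omega> = fscale a (wedge_list (us @ ws))"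
    using mem_E_imp_scaled_wedge_us[OF assms] by blast
  have "set (us @ ws) \<subseteq> V.span (set (us @ gs))"
    using ws(2) V.span_mono[of "set gs" "set (us @ gs)"] V.span_superset[of "set (us @ gs)"] by auto
  moreover have "length (us @ ws) = length us + length gs - 1" using ws(1) False by (cases gs) simp_all
  ultimately show ?thesis using ws(3) by blast
qed

lemma decomposable:
  "1 \<le> length us + length gs - 1 \<Longrightarrow> decomposable_subspace (length us + length gs - 1) E"
  by (rule decomposable_subspaceI) (use mem_E_imp_scaled_wedge in blast)+

lemma V_of_subset_span_factors:
  assumes "\<omega> \<in> E" "\<omega> \<noteq> 0"
  shows "V_of \<omega> \<subseteq> V.span (set (us @ gs))"
proof -
  obtain a xs where xs: "set xs \<subseteq> V.span (set (us @ gs))" "\<omega> = fscale a (wedge_list xs)"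
    using mem_E_imp_scaled_wedge[OF assms(1)] by blast
  then have "V_of \<omega> = V.span (set xs)" using V_of_scaled_wedge_list(2) assms(2) by blast
  with xs(1) show ?thesis by (simp add: V.span_minimal)
qed

lemma gen_not_parallel:
  assumes r: "1 < length gs"
  shows "gen 1 \<notin> V.span {gen 0}"
proof
  have r0: "0 < length gs" using r by linarith
  assume "gen 1 \<in> V.span {gen 0}"
  then obtain k where k: "gen 1 = fscale k (gen 0)" using V.span_singleton by auto
  then have "k \<noteq> 0" using gen_neq_0[OF r] by auto
  with k have "V_of (gen 1) = V_of (gen 0)" by (simp add: V_of_scale)
  moreover have "gs ! 1 \<in> V_of (gen 0)"
  proof -
    have "gs ! 0 \<noteq> gs ! 1" using distinct r by (subst nth_eq_iff_index_eq) auto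
    then have "gs ! 1 \<in> set us \<union> (set gs - {gs ! 0})" using r by auto
    then show ?thesis by (simp add: V_of_gen[OF r0] V.span_base)
  qed
  moreover have "gs ! 1 \<notin> V.span (set us \<union> (set gs - {gs ! 1}))"
  proof
    assume "gs ! 1 \<in> V.span (set us \<union> (set gs - {gs ! 1}))"
    also have "\<dots> \<subseteq> V.span (set (us @ gs) - {gs ! 1})"
      using distinct r by (intro V.span_mono) auto
    finally have "gs ! 1 \<in> V.span (set (us @ gs) - {gs ! 1})" .
    moreover have "gs ! 1 \<in> set (us @ gs)" using r by simp
    ultimately show False using independent unfolding V.dependent_def by blast
  qed
  ultimately show False using V_of_gen[OF r] by simp
qed

text \<open>For two or more generators, the V_b of any two non-parallel basis elements already span
  the whole (l+1)-dimensional space spanned by us and gs.\<close>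
lemma V_of_subset_span_basis:
  assumes B: "V.independent B" "V.span B = E" and \<omega>: "\<omega> \<in> E" "\<omega> \<noteq> 0"
  shows "V_of \<omega> \<subseteq> V.span (\<Union>b\<in>B. V_of b)"
proof -
  consider "length gs = 1" | "1 < length gs" using \<omega> by (cases "length gs") auto
  then show ?thesis
  proof cases
    case 1
    then have "E = V.span {gen 0}" by (simp add: lessThan_Suc)
    then show ?thesis using V_of_subset_span_V_of_line B \<omega> by metis
  next
    case 2
    then have r0: "0 < length gs" by linarith
    have "0 \<notin> B" using B(1) V.dependent_zero by blast
    have "B \<noteq> {}" using B(2) \<omega> by auto
    then obtain b where b: "b \<in> B" by blast
    have "gen i \<in> E" if "i < length gs" for i using that by (intro V.span_base) simp
    then have "\<exists>b'\<in>B. b' \<notin> V.span {b}"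
      using not_parallel_in_spanning_set[OF B(2) _ _ gen_neq_0[OF r0] gen_not_parallel[OF 2] b] r0 2
      by blast
    then obtain b' where b': "b' \<in> B" "b' \<notin> V.span {b}" by blast
    have "b \<in> E" "b' \<in> E" using b b' B(2) V.span_base by blast+
    then obtain a xs a' xs'
      where xs: "length xs = length us + length gs - 1" "set xs \<subseteq> V.span (set (us @ gs))"
        "b = fscale a (wedge_list xs)"
      and xs': "length xs' = length us + length gs - 1" "set xs' \<subseteq> V.span (set (us @ gs))"
        "b' = fscale a' (wedge_list xs')"
      using mem_E_imp_scaled_wedge by meson
    have "card (set (us @ gs)) = Suc (length us + length gs - 1)"
      using distinct_card[OF distinct] 2 by simp
    moreover have "b \<noteq> 0" "b' \<noteq> 0" using b b' \<open>0 \<notin> B\<close> by auto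
    ultimately have "V.span (set (us @ gs)) \<subseteq> V.span (V_of b \<union> V_of b')"
      unfolding xs(3) xs'(3) using b'(2)
      by (intro span_subset_span_V_of_pair[OF independent _ xs(1,2) _ xs'(1,2)]) (simp_all add: xs(3) xs'(3))
    also have "\<dots> \<subseteq> V.span (\<Union>b\<in>B. V_of b)" using b b' by (intro V.span_mono) blast
    finally show ?thesis using V_of_subset_span_factors[OF \<omega>] by blast
  qed
qed

lemma V_low_eq:
  assumes "0 < length gs"
  shows "V_low E = V.span (set us)"
proof -
  have "(\<Inter>i<length gs. set us \<union> (set gs - {gs ! i})) = set us"
    using assms by (auto simp: in_set_conv_nth)
  moreover have "V_low E = (\<Inter>i<length gs. V.span (set us \<union> (set gs - {gs ! i})))"
    by (simp add: V_low_span V_of_gen)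
  moreover have "(\<Inter>i<length gs. V.span (set us \<union> (set gs - {gs ! i})))
      = V.span (\<Inter>i<length gs. set us \<union> (set gs - {gs ! i}))"
    using assms by (intro span_INT_independent[OF independent]) auto
  ultimately show ?thesis by simp
qed

lemma V_up_eq:
  assumes "1 < length gs"
  shows "V_up E = V.span (set (us @ gs))"
proof
  show "V_up E \<subseteq> V.span (set (us @ gs))"
    using V_of_subset_span_factors by (intro V_up_subset_span) blast
  have "set (us @ gs) \<subseteq> (\<Union>i<length gs. set us \<union> (set gs - {gs ! i}))"
  proof
    fix x assume "x \<in> set (us @ gs)"
    moreover have "gs ! 0 \<noteq> gs ! 1" using distinct assms by (subst nth_eq_iff_index_eq) auto
    ultimately show "x \<in> (\<Union>i<length gs. set us \<union> (set gs - {gs ! i}))"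
      using assms by (cases "x = gs ! 0") force+
  qed
  also have "\<dots> \<subseteq> (\<Union>\<omega>\<in>gen ` {..<length gs}. V_of \<omega>)"
    unfolding image_image by (intro UN_mono) (auto simp: V_of_gen intro: V.span_base)
  finally have "V.span (set (us @ gs)) \<subseteq> V.span (\<Union>\<omega>\<in>gen ` {..<length gs}. V_of \<omega>)"
    by (rule V.span_mono)
  also have "\<dots> \<subseteq> V_up E"
    using gen_neq_0 by (intro span_V_of_subset_V_up) (auto intro: V.span_base)
  finally show "V.span (set (us @ gs)) \<subseteq> V_up E" .
qed

end

lemma close_II_properties:
  fixes E :: "('n::{finite,linorder} set \<Rightarrow> 'a::field) set"
  assumes "1 \<le> l" "close_II l r E"
  shows "decomposable_subspace l E"
    and "\<And>B \<omega>. V.independent B \<Longrightarrow> V.span B = E \<Longrightarrow> \<omega> \<in> E - {0}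
           \<Longrightarrow> V_of \<omega> \<subseteq> V.span (\<Union>b\<in>B. V_of b)"
    and "1 < r \<Longrightarrow> V.dim (V_low E) = l + 1 - r \<and> V.dim (V_up E) = l + 1"
proof -
  obtain us gs where us: "int (length us) = int l - int r + 1" "length gs = r" "lin_indep_list (us @ gs)"
    and E: "E = V.span {wedge_list (us @ take i gs @ drop (Suc i) gs) | i. i < r}"
    using assms(2) unfolding close_II_def by blast
  interpret II: close_II_generators us gs by unfold_locales fact
  have "{wedge_list (us @ take i gs @ drop (Suc i) gs) | i. i < r} = II.gen ` {..<length gs}"
    by (auto simp: II.gen_def remove_nth_def us(2))
  then have E_eq: "E = II.E" by (simp add: E)
  have l: "length us + length gs - 1 = l" using us(1,2) by linarith
  show "decomposable_subspace l E" using II.decomposable assms(1) l by (simp add: E_eq)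
  show "V_of \<omega> \<subseteq> V.span (\<Union>b\<in>B. V_of b)"
    if "V.independent B" "V.span B = E" "\<omega> \<in> E - {0}" for B \<omega>
    using II.V_of_subset_span_basis that by (simp add: E_eq)
  show "V.dim (V_low E) = l + 1 - r \<and> V.dim (V_up E) = l + 1" if "1 < r"
  proof -
    have "V_low E = V.span (set us)" "V_up E = V.span (set (us @ gs))"
      using II.V_low_eq II.V_up_eq that us(2) by (simp_all add: E_eq)
    moreover have "V.independent (set us)" using V.independent_mono[OF II.independent] by auto
    ultimately show ?thesis using II.distinct II.independent us(1,2) l
      by (simp add: V.dim_eq_card_independent distinct_card card_Un_disjoint)
  qed
qed

theorem lemma2p5:
  fixes E :: "('n::{finite,linorder} set \<Rightarrow> 'a::field) set"
    and l r :: nat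
  assumes "1 \<le> l" and "l \<le> card (UNIV :: 'n set)"
    and "Modules.module.subspace fscale E" and "E \<subseteq> ext_power l"
    and "Vector_Spaces.vector_space.dim fscale E = r"
    and "close l r E"
  shows "decomposable_subspace l E
    \<and> (\<forall>B. (\<not> Modules.module.dependent fscale B \<and> Modules.module.span fscale B = E) \<longrightarrow>
          V_low E = (\<Inter>\<omega>\<in>B. V_of \<omega>) \<and> V_up E = Modules.module.span fscale (\<Union>\<omega>\<in>B. V_of \<omega>))
    \<and> (r > 1 \<longrightarrow>
          (close_I l r E \<longrightarrow> Vector_Spaces.vector_space.dim fscale (V_low E) = l - 1
                                \<and> Vector_Spaces.vector_space.dim fscale (V_up E) = l + r - 1)
        \<and> (close_II l r E \<longrightarrow> Vector_Spaces.vector_space.dim fscale (V_low E) = l + 1 - r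
                                \<and> Vector_Spaces.vector_space.dim fscale (V_up E) = l + 1))"
proof -
  have decomposable: "decomposable_subspace l E"
    using assms(6) close_I_properties(1)[OF assms(1)] close_II_properties(1)[OF assms(1)]
    unfolding close_def by blast
  have V_of_basis: "V_of \<omega> \<subseteq> V.span (\<Union>b\<in>B. V_of b)"
    if "V.independent B" "V.span B = E" "\<omega> \<in> E - {0}" for B \<omega>
    using assms(6) close_I_properties(2)[OF assms(1) _ that] close_II_properties(2)[OF assms(1) _ that]
    unfolding close_def by blast
  have "V_low E = (\<Inter>\<omega>\<in>B. V_of \<omega>) \<and> V_up E = V.span (\<Union>\<omega>\<in>B. V_of \<omega>)"
    if "V.independent B \<and> V.span B = E" for B
    using that V_low_span[of B] V_up_eq_span_basis[of B E, OF _ _ V_of_basis] by auto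
  moreover have "r > 1 \<longrightarrow>
      (close_I l r E \<longrightarrow> V.dim (V_low E) = l - 1 \<and> V.dim (V_up E) = l + r - 1)
    \<and> (close_II l r E \<longrightarrow> V.dim (V_low E) = l + 1 - r \<and> V.dim (V_up E) = l + 1)"
    using close_I_properties(3)[OF assms(1)] close_II_properties(3)[OF assms(1)] by blast
  ultimately show ?thesis using decomposable by blast
qed

end
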